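(* Assume the setting and Assumptions (A1), (A2), (A3) in the context, and let $\eta>0$, $\zeta>\tfrac12$, $\rho\in(0,1)$ with $\alpha_0\le\frac{\rho(2\zeta-1)}{\zeta L_{\nabla f}\tilde B}$. Then there exist constants $C_1,C_2>0$ (independent of $K$) such that for all $K\ge1$ $$\min_{0\le k\le K-1}\mathbb{E}\|\nabla f(\theta^k)\|^2\le\frac{C_1}{K\alpha_K}+C_2L_K,\qquad L_K\coloneqq\frac{1}{K\alpha_K}\sum_{k=0}^{K-1}\alpha_k\epsilon_k^2 .$$ Moreover, if $\lim_{K\to\infty}L_K=0$, then $\lim_{K\to\infty}\min_{0\le k\le K-1}\mathbb{E}\|\nabla f(\theta^k)\|=0$.
   Context: Setting: $\theta\in\mathbb{R}^d$; $f_1,\dots,f_m:\mathbb{R}^d\to\mathbb{R}$, $f=\frac1m\sum_i f_i$. $\mathcal D$ is a distribution on $v\in\mathbb{R}^m$ with independent entries, $\mathbb{E}[v_i]=1$, $\mathbb{E}[v_i^2]<\infty$; $f_v=\frac1m\sum_iv_if_i$. Inexact stochastic gradient $z_v(\theta)=\nabla f_v(\theta)+e_v(\theta)$. Algorithm ISGD: deterministic $\theta^0$; for $k=0,1,\dots$ sample $v^k\sim\mathcal D$ independently of the past, $\theta^{k+1}=\theta^k-\alpha_kz_{v^k}(\theta^k)$, with positive step sizes $\alpha_k$ and non-negative accuracies $\epsilon_k$. (A1): each $f_i$ is $C^1$ with Lipschitz gradient and bounded below; $f$ has $L_{\nabla f}$-Lipschitz gradient and is bounded below by $f^{\inf}$;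 $A,B,C\ge0$ satisfy $\mathbb{E}_v\|\nabla f_v(\theta)\|^2\le2A(f(\theta)-f^{\inf})+B\|\nabla f(\theta)\|^2+C$ for all $\theta$. (A2): $\mathbb{E}[\|e_{v^k}(\theta^k)\|^2\mid\theta^k]\le\epsilon_k^2$ for all $k$, $\{\epsilon_k\}$ deterministic. (A3): $\{\alpha_k\}$ is positive and non-increasing, $\sum_{k}\alpha_k^2<\infty$, and $\lim_{k\to\infty}\frac{1}{k\alpha_k}=0$. Notation: $\tilde B=\frac{1+\eta}{\eta}B$. *)

theory Defs
  imports "HOL-Analysis.Analysis" "HOL-Probability.Probability"
begin

text \<open>Weighted average (1/m) * sum_i v_i F_i(x), m = CARD('m).
  With v = all-ones this is f = (1/m) sum_i f_i; with F = gradients it is the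
  gradient of f_v (gradient is linear).\<close>
definition wavg :: "real^'m::finite \<Rightarrow> ('m \<Rightarrow> 'x \<Rightarrow> 'y::real_vector) \<Rightarrow> 'x \<Rightarrow> 'y" where
  "wavg v F x = (1 / real CARD('m)) *\<^sub>R (\<Sum>i\<in>UNIV. (v $ i) *\<^sub>R F i x)"

definition ones :: "real^'m::finite" where
  "ones = (\<chi> i. 1)"

end

theory Submission
  imports Defs
begin

text \<open>Let \<open>\<Delta>\<^sub>k = \<bbbE>(f \<theta>\<^sub>k) - f\<^sub>i\<^sub>n\<^sub>f\<close> and \<open>g\<^sub>k = \<bbbE>\<parallel>\<nabla>f \<theta>\<^sub>k\<parallel>\<^sup>2\<close>. The descent lemma for the
  \<open>L\<close>-smooth \<open>f\<close>, Young's inequality for the error term and the growth condition (A1), averaged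
  over the fresh sample \<open>v\<^sub>k\<close> (independent of \<open>\<theta>\<^sub>k\<close>, with conditional error at most \<open>\<epsilon>\<^sub>k\<^sup>2\<close>), give
  \<open>\<Delta>\<^sub>k\<^sub>+\<^sub>1 + c \<alpha>\<^sub>k g\<^sub>k \<le> (1 + a \<alpha>\<^sub>k\<^sup>2) \<Delta>\<^sub>k + \<beta> \<alpha>\<^sub>k\<^sup>2 + \<kappa> \<alpha>\<^sub>k \<epsilon>\<^sub>k\<^sup>2\<close> with
  \<open>c = (1 - \<rho>)(2\<zeta> - 1)/(2\<zeta>) > 0\<close>. Because \<open>\<Sum>\<^sub>k \<alpha>\<^sub>k\<^sup>2 < \<infinity>\<close>, the products of the factors
  \<open>1 + a \<alpha>\<^sub>k\<^sup>2\<close> stay bounded; dividing by them and telescoping bounds \<open>\<Sum>\<^sub>k\<^sub>\<le>\<^sub>K\<^sub>-\<^sub>1 \<alpha>\<^sub>k g\<^sub>k\<close> by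
  a constant plus a multiple of \<open>\<Sum>\<^sub>k\<^sub>\<le>\<^sub>K\<^sub>-\<^sub>1 \<alpha>\<^sub>k \<epsilon>\<^sub>k\<^sup>2\<close>, and since \<open>\<alpha>\<close> is non-increasing that
  sum is at least \<open>K \<alpha>\<^sub>K\<close> times the smallest \<open>g\<^sub>k\<close>. The second claim then follows from
  Cauchy--Schwarz, \<open>\<bbbE>\<parallel>\<nabla>f\<parallel> \<le> (\<bbbE>\<parallel>\<nabla>f\<parallel>\<^sup>2)\<^sup>1\<^sup>/\<^sup>2\<close>.\<close>

section \<open>Inequalities for smooth functions\<close>

lemma descent_lemma:
  fixes f :: "'a::real_inner \<Rightarrow> real"
  assumes f_deriv: "\<And>x. (f has_derivative (\<lambda>h. h \<bullet> g x)) (at x)"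
    and g_lip: "\<And>x y. norm (g x - g y) \<le> L * norm (x - y)"
  shows "f y \<le> f x + g x \<bullet> (y - x) + L / 2 * (norm (y - x))^2"
proof -
  define d where "d = y - x"
  define \<psi> where "\<psi> t = f (x + t *\<^sub>R d) - t * (g x \<bullet> d) - L / 2 * t^2 * (norm d)^2" for t :: real
  have \<psi>_deriv: "(\<psi> has_real_derivative (g (x + t *\<^sub>R d) \<bullet> d - g x \<bullet> d - L * t * (norm d)^2)) (at t)" for t
  proof -
    have "((\<lambda>t. x + t *\<^sub>R d) has_derivative (\<lambda>s. s *\<^sub>R d)) (at t)"
      by (auto intro!: derivative_eq_intros)
    from has_derivative_compose[OF this f_deriv]
    have "((\<lambda>t. f (x + t *\<^sub>R d)) has_derivative (\<lambda>s. (s *\<^sub>R d) \<bullet> g (x + t *\<^sub>R d))) (at t)"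
      by simp
    also have "(\<lambda>s. (s *\<^sub>R d) \<bullet> g (x + t *\<^sub>R d)) = (*) (g (x + t *\<^sub>R d) \<bullet> d)"
      by (simp add: fun_eq_iff inner_commute)
    finally have "((\<lambda>t. f (x + t *\<^sub>R d)) has_derivative (*) (g (x + t *\<^sub>R d) \<bullet> d)) (at t)" .
    then show ?thesis
      unfolding \<psi>_def has_field_derivative_def[symmetric]
      by (auto intro!: derivative_eq_intros simp: power2_eq_square)
  qed
  have "g (x + t *\<^sub>R d) \<bullet> d - g x \<bullet> d - L * t * (norm d)^2 \<le> 0" if "0 \<le> t" for t
  proof -
    have "g (x + t *\<^sub>R d) \<bullet> d - g x \<bullet> d \<le> norm (g (x + t *\<^sub>R d) - g x) * norm d"
      by (metis inner_diff_left norm_cauchy_schwarz)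
    also have "\<dots> \<le> L * norm (t *\<^sub>R d) * norm d"
      using g_lip[of "x + t *\<^sub>R d" x] by (simp add: mult_right_mono)
    also have "\<dots> = L * t * (norm d)^2" using that by (simp add: power2_eq_square)
    finally show ?thesis by simp
  qed
  then have "\<psi> 1 \<le> \<psi> 0"
    using \<psi>_deriv by (intro DERIV_nonpos_imp_nonincreasing[of 0 1]) (auto simp del: diff_le_0_iff_le)
  then show ?thesis unfolding \<psi>_def d_def by (simp add: algebra_simps)
qed

lemma inner_le_Young:
  fixes a b :: "'a::real_inner"
  assumes "z > 0"
  shows "a \<bullet> b \<le> (norm a)^2 / (2 * z) + z * (norm b)^2 / 2"
proof -
  have "0 \<le> (norm (a - z *\<^sub>R b))^2" by simp
  also have "\<dots> = (norm a)^2 - 2 * z * (a \<bullet> b) + z^2 * (norm b)^2"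
    unfolding power2_norm_eq_inner by (simp add: inner_diff_left inner_diff_right inner_commute power2_eq_square)
  finally show ?thesis using assms by (simp add: field_simps power2_eq_square)
qed

lemma norm_add_power2_le:
  fixes a b :: "'a::real_inner"
  assumes "\<eta> > 0"
  shows "(norm (a + b))^2 \<le> (1 + 1/\<eta>) * (norm a)^2 + (1 + \<eta>) * (norm b)^2"
proof -
  have "(norm (a + b))^2 = (norm a)^2 + 2 * (a \<bullet> b) + (norm b)^2"
    by (simp add: power2_norm_eq_inner inner_add_left inner_add_right inner_commute)
  moreover have "2 * (a \<bullet> b) \<le> (norm a)^2 / \<eta> + \<eta> * (norm b)^2"
    using inner_le_Young[OF assms, of a b] by (simp add: field_simps)
  ultimately show ?thesis by (simp add: algebra_simps)
qed

text \<open>The coefficients come from splitting the cross term with the error \<open>e\<close> by Young's inequality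
  with weight \<open>\<zeta>\<close> and the quadratic term by \<open>norm_add_power2_le\<close> with weight \<open>\<eta>\<close>.\<close>

lemma inexact_step_upper_bound:
  fixes f :: "'a::real_inner \<Rightarrow> real"
  assumes f_deriv: "\<And>x. (f has_derivative (\<lambda>h. h \<bullet> g x)) (at x)"
    and g_lip: "\<And>x y. norm (g x - g y) \<le> L * norm (x - y)"
    and "L \<ge> 0" "\<alpha> > 0" "\<zeta> > 0" "\<eta> > 0"
  shows "f (x - \<alpha> *\<^sub>R (u + e)) \<le> f x - \<alpha> * (g x \<bullet> u) + \<alpha> * (norm (g x))^2 / (2 * \<zeta>)
      + L * \<alpha>^2 * (1 + 1/\<eta>) / 2 * (norm u)^2 + (\<alpha> * \<zeta> / 2 + L * \<alpha>^2 * (1 + \<eta>) / 2) * (norm e)^2"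
proof -
  have "(norm (x - \<alpha> *\<^sub>R (u + e) - x))^2 = \<alpha>^2 * (norm (u + e))^2"
    using \<open>\<alpha> > 0\<close> by (simp add: power_mult_distrib)
  moreover have "g x \<bullet> (x - \<alpha> *\<^sub>R (u + e) - x) = - \<alpha> * (g x \<bullet> u) + \<alpha> * (- g x \<bullet> e)"
    by (simp add: algebra_simps)
  ultimately have "f (x - \<alpha> *\<^sub>R (u + e)) \<le> f x - \<alpha> * (g x \<bullet> u) + \<alpha> * (- g x \<bullet> e) + L / 2 * (\<alpha>^2 * (norm (u + e))^2)"
    using descent_lemma[OF f_deriv g_lip, of "x - \<alpha> *\<^sub>R (u + e)" x] by simp
  moreover have "\<alpha> * (- g x \<bullet> e) \<le> \<alpha> * ((norm (g x))^2 / (2 * \<zeta>) + \<zeta> * (norm e)^2 / 2)"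
    using inner_le_Young[OF \<open>\<zeta> > 0\<close>, of "- g x" e] \<open>\<alpha> > 0\<close> by (intro mult_left_mono) auto
  moreover have "L / 2 * (\<alpha>^2 * (norm (u + e))^2) \<le> L / 2 * (\<alpha>^2 * ((1 + 1/\<eta>) * (norm u)^2 + (1 + \<eta>) * (norm e)^2))"
    using norm_add_power2_le[OF \<open>\<eta> > 0\<close>, of u e] \<open>L \<ge> 0\<close> by (intro mult_left_mono) auto
  ultimately show ?thesis by (simp add: algebra_simps add_divide_distrib)
qed

lemma has_derivative_wavg_ones:
  fixes F :: "'m::finite \<Rightarrow> 'a::real_inner \<Rightarrow> real"
  assumes "\<And>i x. GDERIV (F i) x :> G i x"
  shows "(wavg ones F has_derivative (\<lambda>h. h \<bullet> wavg ones G x)) (at x)"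
proof -
  have "(F i has_derivative (\<lambda>h. h \<bullet> G i x)) (at x)" for i
    using assms by (simp add: gderiv_def)
  then have "(wavg ones F has_derivative
      (\<lambda>h. (1 / real CARD('m)) *\<^sub>R (\<Sum>i\<in>UNIV. (ones $ i) *\<^sub>R (h \<bullet> G i x)))) (at x)"
    unfolding wavg_def[abs_def]
    by (intro has_derivative_scaleR_right has_derivative_sum has_derivative_scaleR_right)
  moreover have "(\<lambda>h. (1 / real CARD('m)) *\<^sub>R (\<Sum>i\<in>UNIV. (ones $ i) *\<^sub>R (h \<bullet> G i x))) = (\<lambda>h. h \<bullet> wavg ones G x)"
    by (simp add: wavg_def inner_sum_right fun_eq_iff)
  ultimately show ?thesis by simp
qed

section \<open>Integrals and independence\<close>

lemma nn_integral_le_integral_add_nn_integral: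
  fixes S P Q :: "'a \<Rightarrow> real"
  assumes le: "\<And>x. S x \<le> P x + Q x" and S_nonneg: "\<And>x. 0 \<le> S x" and Q_nonneg: "\<And>x. 0 \<le> Q x"
    and P: "integrable N P" and Q: "Q \<in> borel_measurable N"
  shows "(\<integral>\<^sup>+x. ennreal (S x) \<partial>N) \<le> ennreal (integral\<^sup>L N P) + (\<integral>\<^sup>+x. ennreal (Q x) \<partial>N)"
proof (cases "integrable N Q")
  case False
  then have "(\<integral>\<^sup>+x. ennreal (Q x) \<partial>N) = \<infinity>"
    using Q Q_nonneg by (auto intro: integrableI_nonneg simp: less_top)
  then show ?thesis by simp
next
  case True
  have "(\<integral>\<^sup>+x. ennreal (S x) \<partial>N) \<le> (\<integral>\<^sup>+x. ennreal (P x + Q x) \<partial>N)"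
    using le by (intro nn_integral_mono) (auto intro: ennreal_leI)
  also have "\<dots> = ennreal (integral\<^sup>L N P + integral\<^sup>L N Q)"
    using P True le S_nonneg by (subst nn_integral_eq_integral) (auto intro: order_trans)
  also have "\<dots> \<le> ennreal (integral\<^sup>L N P) + ennreal (integral\<^sup>L N Q)"
    using Q_nonneg by (cases "integral\<^sup>L N P \<ge> 0") (auto simp: ennreal_neg intro: ennreal_leI)
  also have "ennreal (integral\<^sup>L N Q) = (\<integral>\<^sup>+x. ennreal (Q x) \<partial>N)"
    using True Q_nonneg by (simp add: nn_integral_eq_integral)
  finally show ?thesis .
qed

primrec iterate_inputs :: "(nat \<Rightarrow> 'x \<Rightarrow> 'v \<Rightarrow> 'x) \<Rightarrow> 'x \<Rightarrow> (nat \<Rightarrow> 'v) \<Rightarrow> nat \<Rightarrow> 'x" where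
  "iterate_inputs s x0 w 0 = x0"
| "iterate_inputs s x0 w (Suc k) = s k (iterate_inputs s x0 w k) (w k)"

lemma iterate_inputs_cong:
  "(\<And>j. j < k \<Longrightarrow> w j = w' j) \<Longrightarrow> iterate_inputs s x0 w k = iterate_inputs s x0 w' k"
  by (induction k) auto

lemma measurable_iterate_inputs:
  fixes s :: "nat \<Rightarrow> 'x::topological_space \<Rightarrow> 'v::topological_space \<Rightarrow> 'x"
  assumes s: "\<And>k. (\<lambda>p. s k (fst p) (snd p)) \<in> borel_measurable (borel \<Otimes>\<^sub>M borel)"
    and "k \<le> n"
  shows "(\<lambda>w. iterate_inputs s x0 w k) \<in> borel_measurable (PiM {..<n} (\<lambda>_. borel))"
  using \<open>k \<le> n\<close>
proof (induction k)
  case (Suc k)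
  then have "(\<lambda>w. (iterate_inputs s x0 w k, w k)) \<in> measurable (PiM {..<n} (\<lambda>_. borel)) (borel \<Otimes>\<^sub>M borel)"
    by (intro measurable_Pair) (auto intro!: measurable_component_singleton)
  from measurable_comp[OF this s[of k]] show ?case by (simp add: comp_def)
qed simp

lemma (in prob_space) nn_integral_indep_var_Fubini:
  fixes X Y :: "'a \<Rightarrow> 'c" and h1 :: "'c \<Rightarrow> 'b::topological_space" and h2 :: "'c \<Rightarrow> 'd::topological_space"
  assumes ind: "indep_var S X T Y" and h1[measurable]: "h1 \<in> measurable S borel"
    and h2[measurable]: "h2 \<in> measurable T borel"
    and law: "distr M borel (\<lambda>\<omega>. h2 (Y \<omega>)) = D" and \<phi>[measurable]: "\<phi> \<in> borel_measurable (borel \<Otimes>\<^sub>M borel)"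
  shows "(\<integral>\<^sup>+\<omega>. \<phi> (h1 (X \<omega>), h2 (Y \<omega>)) \<partial>M) = (\<integral>\<^sup>+\<omega>. (\<integral>\<^sup>+v. \<phi> (h1 (X \<omega>), v) \<partial>D) \<partial>M)"
proof -
  have joint: "distr M S X \<Otimes>\<^sub>M distr M T Y = distr M (S \<Otimes>\<^sub>M T) (\<lambda>\<omega>. (X \<omega>, Y \<omega>))"
    and X[measurable]: "X \<in> measurable M S" and Y[measurable]: "Y \<in> measurable M T"
    using ind unfolding indep_var_distribution_eq by auto
  interpret Y: prob_space "distr M T Y" by (rule prob_space_distr) (rule Y)
  interpret D: prob_space D unfolding law[symmetric] by (rule prob_space_distr) simp
  have sets_D: "sets D = sets borel" unfolding law[symmetric] by simp
  have "(\<integral>\<^sup>+\<omega>. \<phi> (h1 (X \<omega>), h2 (Y \<omega>)) \<partial>M)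
      = (\<integral>\<^sup>+p. \<phi> (h1 (fst p), h2 (snd p)) \<partial>(distr M S X \<Otimes>\<^sub>M distr M T Y))"
    unfolding joint by (simp add: nn_integral_distr)
  also have "\<dots> = (\<integral>\<^sup>+x. (\<integral>\<^sup>+y. \<phi> (h1 x, h2 y) \<partial>distr M T Y) \<partial>distr M S X)"
    by (subst Y.nn_integral_fst[symmetric]) (auto simp: measurable_cong_sets[OF sets_pair_measure_cong[OF sets_distr sets_distr] refl])
  also have "\<dots> = (\<integral>\<^sup>+x. (\<integral>\<^sup>+v. \<phi> (h1 x, v) \<partial>D) \<partial>distr M S X)"
    unfolding law[symmetric] by (intro nn_integral_cong) (simp add: nn_integral_distr)
  also have "\<dots> = (\<integral>\<^sup>+\<omega>. (\<integral>\<^sup>+v. \<phi> (h1 (X \<omega>), v) \<partial>D) \<partial>M)"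
  proof -
    have "\<phi> \<in> borel_measurable (borel \<Otimes>\<^sub>M D)"
      by (simp add: measurable_cong_sets[OF sets_pair_measure_cong[OF refl sets_D] refl])
    from D.borel_measurable_nn_integral_fst[OF this]
    have "(\<lambda>x. \<integral>\<^sup>+v. \<phi> (h1 x, v) \<partial>D) \<in> borel_measurable S" by measurable
    then show ?thesis by (simp add: nn_integral_distr)
  qed
  finally show ?thesis .
qed

lemma (in prob_space) nn_integral_norm_le_sqrt:
  fixes X :: "'a \<Rightarrow> 'b::real_normed_vector"
  assumes [measurable]: "X \<in> borel_measurable M"
    and "(\<integral>\<^sup>+\<omega>. ennreal ((norm (X \<omega>))^2) \<partial>M) \<le> ennreal r"
  shows "(\<integral>\<^sup>+\<omega>. ennreal (norm (X \<omega>)) \<partial>M) \<le> ennreal (sqrt r)"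
proof -
  have "(\<integral>\<^sup>+\<omega>. ennreal (norm (X \<omega>)) * 1 \<partial>M)^2 \<le> (\<integral>\<^sup>+\<omega>. ennreal (norm (X \<omega>))^2 \<partial>M) * (\<integral>\<^sup>+\<omega>. 1^2 \<partial>M)"
    by (rule Cauchy_Schwarz_nn_integral) auto
  also have "\<dots> = (\<integral>\<^sup>+\<omega>. ennreal ((norm (X \<omega>))^2) \<partial>M)"
    by (simp add: ennreal_power emeasure_space_1)
  finally have "(\<integral>\<^sup>+\<omega>. ennreal (norm (X \<omega>)) \<partial>M)^2 \<le> ennreal r"
    using assms(2) by (simp add: ennreal_power)
  then show ?thesis
    by (cases "\<integral>\<^sup>+\<omega>. ennreal (norm (X \<omega>)) \<partial>M" rule: ennreal_cases)
      (auto simp: ennreal_power ennreal_le_iff2 real_le_rsqrt top_unique)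
qed

lemma (in prob_space) Min_nn_integral_norm_tendsto_zero:
  fixes X :: "nat \<Rightarrow> 'a \<Rightarrow> 'b::real_normed_vector"
  assumes [measurable]: "\<And>k. X k \<in> borel_measurable M"
    and bound: "\<And>K. K \<ge> 1 \<Longrightarrow> Min ((\<lambda>k. \<integral>\<^sup>+\<omega>. ennreal ((norm (X k \<omega>))^2) \<partial>M) ` {..<K}) \<le> ennreal (r K)"
    and r: "r \<longlonglongrightarrow> 0"
  shows "(\<lambda>K. Min ((\<lambda>k. \<integral>\<^sup>+\<omega>. ennreal (norm (X k \<omega>)) \<partial>M) ` {..<K})) \<longlonglongrightarrow> 0"
proof (rule tendsto_sandwich[OF _ _ tendsto_const])
  show "\<forall>\<^sub>F K in sequentially. Min ((\<lambda>k. \<integral>\<^sup>+\<omega>. ennreal (norm (X k \<omega>)) \<partial>M) ` {..<K}) \<le> ennreal (sqrt (r K))"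
  proof (rule eventually_sequentiallyI[of 1])
    fix K :: nat assume "K \<ge> 1"
    then have "Min ((\<lambda>k. \<integral>\<^sup>+\<omega>. ennreal ((norm (X k \<omega>))^2) \<partial>M) ` {..<K})
        \<in> (\<lambda>k. \<integral>\<^sup>+\<omega>. ennreal ((norm (X k \<omega>))^2) \<partial>M) ` {..<K}"
      by (intro Min_in) (auto simp: lessThan_empty_iff)
    then obtain k where "k < K"
      and "(\<integral>\<^sup>+\<omega>. ennreal ((norm (X k \<omega>))^2) \<partial>M) \<le> ennreal (r K)"
      using bound[OF \<open>K \<ge> 1\<close>] by auto
    then have "Min ((\<lambda>k. \<integral>\<^sup>+\<omega>. ennreal (norm (X k \<omega>)) \<partial>M) ` {..<K}) \<le> (\<integral>\<^sup>+\<omega>. ennreal (norm (X k \<omega>)) \<partial>M)"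
      and "(\<integral>\<^sup>+\<omega>. ennreal (norm (X k \<omega>)) \<partial>M) \<le> ennreal (sqrt (r K))"
      by (auto intro: nn_integral_norm_le_sqrt)
    then show "Min ((\<lambda>k. \<integral>\<^sup>+\<omega>. ennreal (norm (X k \<omega>)) \<partial>M) ` {..<K}) \<le> ennreal (sqrt (r K))"
      by (rule order_trans)
  qed
  show "(\<lambda>K. ennreal (sqrt (r K))) \<longlonglongrightarrow> 0"
    using tendsto_ennrealI[OF tendsto_real_sqrt[OF r]] by simp
qed simp

section \<open>Deterministic recursions\<close>

lemma prod_one_plus_le_exp_sum:
  fixes t :: "nat \<Rightarrow> real"
  assumes "\<And>j. t j \<ge> 0"
  shows "(\<Prod>j<k. 1 + t j) \<le> exp (\<Sum>j<k. t j)"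
proof -
  have "(\<Prod>j<k. 1 + t j) \<le> (\<Prod>j<k. exp (t j))"
    using assms by (intro prod_mono) auto
  then show ?thesis by (simp add: exp_sum)
qed

lemma recursion_telescope:
  fixes d u a b :: "nat \<Rightarrow> real"
  assumes rec: "\<And>k. d (Suc k) + u k \<le> a k * d k + b k" and a: "\<And>k. a k \<ge> 1"
  shows "d K / (\<Prod>j<K. a j) + (\<Sum>k<K. u k / (\<Prod>j<Suc k. a j)) \<le> d 0 + (\<Sum>k<K. b k / (\<Prod>j<Suc k. a j))"
proof (induction K)
  case (Suc K)
  have "(\<Prod>j<Suc K. a j) > 0" using a by (intro prod_pos) (auto intro: less_le_trans[of 0 1])
  then have "d (Suc K) / (\<Prod>j<Suc K. a j) + u K / (\<Prod>j<Suc K. a j) \<le> (a K * d K + b K) / (\<Prod>j<Suc K. a j)"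
    using rec[of K] by (simp add: add_divide_distrib[symmetric] divide_right_mono)
  also have "\<dots> = d K / (\<Prod>j<K. a j) + b K / (\<Prod>j<Suc K. a j)"
    using a[of K] by (simp add: add_divide_distrib)
  finally show ?case using Suc by simp
qed simp

lemma sum_le_of_recursion:
  fixes d u a b :: "nat \<Rightarrow> real"
  assumes rec: "\<And>k. d (Suc k) + u k \<le> a k * d k + b k"
    and a: "\<And>k. a k \<ge> 1" and d: "\<And>k. d k \<ge> 0" and u: "\<And>k. u k \<ge> 0" and b: "\<And>k. b k \<ge> 0"
    and P: "\<And>K. (\<Prod>j<K. a j) \<le> P"
  shows "(\<Sum>k<K. u k) \<le> P * (d 0 + (\<Sum>k<K. b k))"
proof -
  have W: "1 \<le> (\<Prod>j<k. a j)" for k using a by (intro prod_ge_1) auto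
  have "u k / P \<le> u k / (\<Prod>j<Suc k. a j)" for k
    using u[of k] W[of "Suc k"] P[of "Suc k"] by (intro divide_left_mono mult_pos_pos) auto
  then have "(\<Sum>k<K. u k / P) \<le> (\<Sum>k<K. u k / (\<Prod>j<Suc k. a j))"
    by (intro sum_mono)
  also have "\<dots> \<le> d 0 + (\<Sum>k<K. b k / (\<Prod>j<Suc k. a j)) - d K / (\<Prod>j<K. a j)"
    using recursion_telescope[of d u a b K, OF rec a] by simp
  also have "\<dots> \<le> d 0 + (\<Sum>k<K. b k)"
  proof -
    have "b k / (\<Prod>j<Suc k. a j) \<le> b k / 1" for k
      using b[of k] W[of "Suc k"] by (intro divide_left_mono) auto
    then have "(\<Sum>k<K. b k / (\<Prod>j<Suc k. a j)) \<le> (\<Sum>k<K. b k)"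
      by (intro sum_mono) simp
    moreover have "0 \<le> d K / (\<Prod>j<K. a j)"
      using d[of K] W[of K] by simp
    ultimately show ?thesis by linarith
  qed
  finally show ?thesis
    using order_trans[OF W[of 0] P[of 0]] by (simp add: sum_divide_distrib[symmetric] divide_le_eq mult.commute)
qed

lemma exists_le_weighted_sum:
  fixes \<alpha> g :: "nat \<Rightarrow> real"
  assumes "antimono \<alpha>" "\<And>k. \<alpha> k > 0" "\<And>k. g k \<ge> 0" "K \<ge> 1"
  shows "\<exists>k<K. real K * \<alpha> K * g k \<le> (\<Sum>j<K. \<alpha> j * g j)"
proof -
  have "Min (g ` {..<K}) \<in> g ` {..<K}"
    using \<open>K \<ge> 1\<close> by (intro Min_in) (auto simp: lessThan_empty_iff)
  then obtain k where k: "k < K" "g k = Min (g ` {..<K})" by auto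
  then have g_min: "g k \<le> g j" if "j < K" for j
    using that by simp
  have "real K * \<alpha> K * g k = (\<Sum>j<K. \<alpha> K * g k)" by simp
  also have "\<dots> \<le> (\<Sum>j<K. \<alpha> j * g j)"
    using assms g_min by (intro sum_mono mult_mono) (auto simp: antimono_def less_imp_le)
  finally show ?thesis using k by blast
qed

lemma exists_le_rate:
  fixes \<alpha> g :: "nat \<Rightarrow> real"
  assumes "antimono \<alpha>" "\<And>k. \<alpha> k > 0" "\<And>k. g k \<ge> 0" "K \<ge> 1"
    and "c > 0" "E \<ge> 0" "a \<le> c * C1" "b \<le> c * C2"
    and sum: "c * (\<Sum>k<K. \<alpha> k * g k) \<le> a + b * E"
  shows "\<exists>k<K. g k \<le> C1 / (real K * \<alpha> K) + C2 * ((1 / (real K * \<alpha> K)) * E)"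
proof -
  obtain k where "k < K" and k: "real K * \<alpha> K * g k \<le> (\<Sum>j<K. \<alpha> j * g j)"
    using exists_le_weighted_sum[of \<alpha> g K] assms(1-4) by blast
  have "c * (real K * \<alpha> K) * g k \<le> c * (\<Sum>j<K. \<alpha> j * g j)"
    using mult_left_mono[OF k, of c] \<open>c > 0\<close> by (simp add: mult.assoc)
  also have "\<dots> \<le> c * (C1 + C2 * E)"
    using sum \<open>a \<le> c * C1\<close> mult_right_mono[OF \<open>b \<le> c * C2\<close> \<open>E \<ge> 0\<close>] by (simp add: algebra_simps)
  finally have "(real K * \<alpha> K) * g k \<le> C1 + C2 * E"
    using \<open>c > 0\<close> by (simp add: mult.assoc)
  then have "g k \<le> (C1 + C2 * E) / (real K * \<alpha> K)"
    using assms(2)[of K] \<open>K \<ge> 1\<close> by (simp add: pos_le_divide_eq mult.commute)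
  then show ?thesis
    using \<open>k < K\<close> by (auto simp: add_divide_distrib)
qed

lemma real_recursion_of_ennreal:
  fixes x y :: "nat \<Rightarrow> ennreal" and w a b :: "nat \<Rightarrow> real"
  assumes rec: "\<And>k. x (Suc k) + ennreal (w k) * y k \<le> ennreal (a k) * x k + ennreal (b k)"
    and "x 0 < \<infinity>" and w: "\<And>k. w k > 0" and a: "\<And>k. a k \<ge> 0" and b: "\<And>k. b k \<ge> 0"
  shows "y k = ennreal (enn2real (y k))"
    and "enn2real (x (Suc k)) + w k * enn2real (y k) \<le> a k * enn2real (x k) + b k"
proof -
  have x_fin: "x k < \<infinity>" for k
  proof (induction k)
    case (Suc k)
    have "x (Suc k) \<le> ennreal (a k) * x k + ennreal (b k)" using rec[of k] by (rule order_trans[rotated]) simp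
    also have "\<dots> < \<infinity>" using Suc by (simp add: ennreal_mult_less_top)
    finally show ?case .
  qed fact
  have y_fin: "y k < \<infinity>" for k
  proof -
    have "ennreal (w k) * y k \<le> ennreal (a k) * x k + ennreal (b k)"
      using rec[of k] by (rule order_trans[rotated]) simp
    also have "\<dots> < \<infinity>"
      using x_fin[of k] by (simp add: ennreal_mult_less_top)
    finally show ?thesis
      using w[of k] by (auto simp: ennreal_mult_less_top ennreal_eq_0_iff)
  qed
  show "y k = ennreal (enn2real (y k))"
    using y_fin by (simp add: less_top)
  have "x k \<noteq> \<infinity>" "x (Suc k) \<noteq> \<infinity>" "y k \<noteq> \<infinity>"
    using x_fin y_fin by (simp_all add: less_top)
  then have "ennreal (enn2real (x (Suc k)) + w k * enn2real (y k)) \<le> ennreal (a k * enn2real (x k) + b k)"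
    using rec[of k] w[of k] a[of k] b[of k] by (simp add: ennreal_mult ennreal_enn2real_if)
  then show "enn2real (x (Suc k)) + w k * enn2real (y k) \<le> a k * enn2real (x k) + b k"
    using a[of k] b[of k] by (subst (asm) ennreal_le_iff) auto
qed

section \<open>One step in expectation\<close>

locale isgd_objective = D: prob_space D
  for D :: "(real^'m::finite) measure"
  + fixes F :: "'m \<Rightarrow> real^'d::finite \<Rightarrow> real" and G :: "'m \<Rightarrow> real^'d \<Rightarrow> real^'d"
    and Lf finf A B C \<eta> \<zeta> \<rho> :: real
  assumes D_sets: "sets D = sets borel"
    and D_mean: "\<And>i. integral\<^sup>L D (\<lambda>v. v $ i) = 1"
    and D_sq: "\<And>i. integrable D (\<lambda>v. (v $ i)^2)"
    and F_grad: "\<And>i x. GDERIV (F i) x :> G i x"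
    and G_lip: "\<And>i. \<exists>L. \<forall>x y. norm (G i x - G i y) \<le> L * norm (x - y)"
    and f_lip: "\<And>x y. norm (wavg ones G x - wavg ones G y) \<le> Lf * norm (x - y)"
    and f_lb: "\<And>x. finf \<le> wavg ones F x"
    and ABC_nonneg: "A \<ge> 0" "B \<ge> 0" "C \<ge> 0"
    and ABC: "\<And>x. integral\<^sup>L D (\<lambda>v. (norm (wavg v G x))^2)
               \<le> 2 * A * (wavg ones F x - finf) + B * (norm (wavg ones G x))^2 + C"
    and eta: "\<eta> > 0" and zeta: "\<zeta> > 1/2" and rho: "0 < \<rho>" "\<rho> < 1"
begin

abbreviation f :: "real^'d \<Rightarrow> real" where "f \<equiv> wavg ones F"

abbreviation gradf :: "real^'d \<Rightarrow> real^'d" where "gradf \<equiv> wavg ones G"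

definition decrease_coeff :: real where
  "decrease_coeff = (1 - \<rho>) * (2 * \<zeta> - 1) / (2 * \<zeta>)"

definition growth_coeff :: "real \<Rightarrow> real" where
  "growth_coeff \<alpha> = 1 + Lf * (1 + 1/\<eta>) * A * \<alpha>^2"

definition noise_coeff :: "real \<Rightarrow> real" where
  "noise_coeff \<alpha> = Lf * (1 + 1/\<eta>) * C / 2 * \<alpha>^2"

definition error_coeff :: "real \<Rightarrow> real" where
  "error_coeff \<alpha> = \<alpha> * \<zeta> / 2 + Lf * (1 + \<eta>) / 2 * \<alpha>^2"

lemma Lf_nonneg: "Lf \<ge> 0"
proof (rule ccontr)
  assume "\<not> Lf \<ge> 0"
  moreover have "norm (0 - 1 :: real^'d) > 0"
    by (metis diff_0 norm_minus_cancel zero_less_norm_iff zero_neq_one)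
  ultimately have "Lf * norm (0 - 1 :: real^'d) < 0"
    by (simp add: mult_neg_pos)
  then show False
    using f_lip[of 0 1] norm_ge_zero[of "gradf 0 - gradf 1"] by linarith
qed

lemma decrease_coeff_pos: "decrease_coeff > 0"
  unfolding decrease_coeff_def using rho zeta by simp

lemma growth_coeff_ge_1: "growth_coeff \<alpha> \<ge> 1"
  unfolding growth_coeff_def using Lf_nonneg eta ABC_nonneg by simp

lemma noise_coeff_nonneg: "noise_coeff \<alpha> \<ge> 0"
  unfolding noise_coeff_def using Lf_nonneg eta ABC_nonneg by simp

lemma error_coeff_nonneg: "\<alpha> \<ge> 0 \<Longrightarrow> error_coeff \<alpha> \<ge> 0"
  unfolding error_coeff_def using Lf_nonneg eta zeta by simp

lemma f_has_derivative: "(f has_derivative (\<lambda>h. h \<bullet> gradf x)) (at x)"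
  by (rule has_derivative_wavg_ones[OF F_grad])

lemma borel_measurable_f[measurable]: "f \<in> borel_measurable borel"
  using f_has_derivative
  by (intro borel_measurable_continuous_onI continuous_at_imp_continuous_on ballI has_derivative_continuous)

lemma borel_measurable_gradf[measurable]: "gradf \<in> borel_measurable borel"
proof -
  have "Lf-lipschitz_on UNIV gradf"
    using f_lip Lf_nonneg by (intro lipschitz_onI) (auto simp: dist_norm)
  then show ?thesis by (intro borel_measurable_continuous_onI lipschitz_on_continuous_on)
qed

lemma continuous_on_G: "continuous_on UNIV (G i)"
proof -
  obtain L where L: "\<forall>x y. norm (G i x - G i y) \<le> L * norm (x - y)" using G_lip by blast
  have "(max L 0)-lipschitz_on UNIV (G i)"
  proof (rule lipschitz_onI)
    show "dist (G i x) (G i y) \<le> max L 0 * dist x y" for x y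
      using L[rule_format, of x y] by (simp add: dist_norm)
        (meson max.cobounded1 mult_right_mono norm_ge_zero order_trans)
  qed simp
  then show ?thesis by (rule lipschitz_on_continuous_on)
qed

lemma borel_measurable_wavg:
  "(\<lambda>p :: (real^'d) \<times> (real^'m). wavg (snd p) G (fst p)) \<in> borel_measurable (borel \<Otimes>\<^sub>M borel)"
  unfolding borel_prod wavg_def
  by (intro borel_measurable_continuous_onI continuous_intros continuous_on_component
      continuous_on_compose2[OF continuous_on_G]) auto

lemma borel_measurable_wavg_sample[measurable]: "(\<lambda>v. wavg v G x) \<in> borel_measurable borel"
  using measurable_Pair2[OF borel_measurable_wavg, of x] by simp

lemma borel_measurable_nn_integral_sample:
  "\<phi> \<in> borel_measurable (borel \<Otimes>\<^sub>M borel) \<Longrightarrow> (\<lambda>x. \<integral>\<^sup>+v. \<phi> (x, v) \<partial>D) \<in> borel_measurable borel"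
  by (rule D.borel_measurable_nn_integral_fst)
    (simp add: measurable_cong_sets[OF sets_pair_measure_cong[OF refl D_sets] refl])

lemma measurable_D_borel: "g \<in> measurable borel N \<Longrightarrow> g \<in> measurable D N"
  unfolding measurable_cong_sets[OF D_sets refl] .

lemma integrable_component: "integrable D (\<lambda>v. v $ i)"
proof (rule D.square_integrable_imp_integrable[OF _ D_sq])
  show "(\<lambda>v. v $ i) \<in> borel_measurable D"
    by (rule measurable_D_borel) simp
qed

lemma integrable_component_mult: "integrable D (\<lambda>v. v $ i * v $ j)"
proof (rule Bochner_Integration.integrable_bound)
  show "integrable D (\<lambda>v. (v $ i)^2 + (v $ j)^2)"
    using D_sq[of i] D_sq[of j] by (rule Bochner_Integration.integrable_add)
  have "\<bar>a * b\<bar> \<le> a^2 + b^2" for a b :: real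
    using sum_squares_bound[of "\<bar>a\<bar>" "\<bar>b\<bar>"] mult_nonneg_nonneg[OF abs_ge_zero abs_ge_zero, of a b]
    unfolding abs_mult power2_abs by linarith
  then show "AE v in D. norm (v $ i * v $ j) \<le> norm ((v $ i)^2 + (v $ j)^2)"
    by simp
qed (rule measurable_D_borel, simp)

lemma inner_wavg_eq: "y \<bullet> wavg v G x = (\<Sum>i\<in>UNIV. v $ i * ((y \<bullet> G i x) / real CARD('m)))"
  unfolding wavg_def by (simp add: inner_sum_right sum_divide_distrib)

lemma integrable_inner_wavg: "integrable D (\<lambda>v. y \<bullet> wavg v G x)"
  unfolding inner_wavg_eq using integrable_component by simp

lemma integral_inner_wavg: "integral\<^sup>L D (\<lambda>v. y \<bullet> wavg v G x) = y \<bullet> gradf x"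
  unfolding inner_wavg_eq using integrable_component
  by (simp add: D_mean ones_def)

lemma integrable_norm_wavg_sq: "integrable D (\<lambda>v. (norm (wavg v G x))^2)"
proof -
  have "(norm (wavg v G x))^2 = (\<Sum>i\<in>UNIV. \<Sum>j\<in>UNIV. v $ i * v $ j * ((G j x \<bullet> G i x) / (real CARD('m))^2))" for v
    unfolding power2_norm_eq_inner wavg_def
    by (simp add: inner_sum_left inner_sum_right sum_divide_distrib sum_distrib_left power2_eq_square algebra_simps)
  then show ?thesis
    using integrable_component_mult by simp
qed

text \<open>The step-size condition is exactly what makes the variance term \<open>B \<parallel>\<nabla>f\<parallel>\<^sup>2\<close> of (A1) eat at
  most the fraction \<open>\<rho>\<close> of the decrease \<open>\<alpha> (1 - 1/(2\<zeta>)) \<parallel>\<nabla>f\<parallel>\<^sup>2\<close> left after Young's inequality.\<close>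

lemma integral_step_majorant_le:
  assumes \<alpha>: "\<alpha> > 0" and step: "\<alpha> * (\<zeta> * Lf * ((1 + \<eta>) / \<eta> * B)) \<le> \<rho> * (2 * \<zeta> - 1)"
  shows "integral\<^sup>L D (\<lambda>v. f x - finf + \<alpha> * (norm (gradf x))^2 / (2 * \<zeta>) + \<alpha> * decrease_coeff * (norm (gradf x))^2
      - \<alpha> * (gradf x \<bullet> wavg v G x) + Lf * \<alpha>^2 * (1 + 1/\<eta>) / 2 * (norm (wavg v G x))^2)
    \<le> growth_coeff \<alpha> * (f x - finf) + noise_coeff \<alpha>"
proof -
  define g where "g = (norm (gradf x))^2"
  define K where "K = Lf * \<alpha>^2 * (1 + 1/\<eta>) / 2"
  define c0 where "c0 = f x - finf + \<alpha> * g / (2 * \<zeta>) + \<alpha> * decrease_coeff * g"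
  have g: "g \<ge> 0" and K: "K \<ge> 0"
    using Lf_nonneg eta by (simp_all add: g_def K_def)
  have "integral\<^sup>L D (\<lambda>v. c0 - \<alpha> * (gradf x \<bullet> wavg v G x) + K * (norm (wavg v G x))^2)
      = c0 - \<alpha> * g + K * integral\<^sup>L D (\<lambda>v. (norm (wavg v G x))^2)"
    using integrable_inner_wavg integrable_norm_wavg_sq
    by (simp add: integral_inner_wavg g_def power2_norm_eq_inner D.prob_space)
  also have "\<dots> \<le> c0 - \<alpha> * g + K * (2 * A * (f x - finf) + B * g + C)"
    using ABC[of x] K by (simp add: g_def mult_left_mono)
  also have "\<dots> \<le> growth_coeff \<alpha> * (f x - finf) + noise_coeff \<alpha>"
  proof -
    have "K * B \<le> \<alpha> * \<rho> * (2 * \<zeta> - 1) / (2 * \<zeta>)"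
      using mult_left_mono[OF step, of \<alpha>] \<alpha> zeta eta
      by (simp add: K_def field_simps power2_eq_square)
    then have "\<alpha> * g / (2 * \<zeta>) + \<alpha> * decrease_coeff * g - \<alpha> * g + K * B * g \<le> 0"
      using mult_right_mono[OF _ g, of "K * B" "\<alpha> * \<rho> * (2 * \<zeta> - 1) / (2 * \<zeta>)"] zeta
      by (simp add: decrease_coeff_def field_simps)
    moreover have "c0 - \<alpha> * g + K * (2 * A * (f x - finf) + B * g + C)
        = growth_coeff \<alpha> * (f x - finf) + noise_coeff \<alpha>
          + (\<alpha> * g / (2 * \<zeta>) + \<alpha> * decrease_coeff * g - \<alpha> * g + K * B * g)"
      using eta by (simp add: c0_def growth_coeff_def noise_coeff_def K_def field_simps)
    ultimately show ?thesis by linarith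
  qed
  finally show ?thesis
    unfolding c0_def K_def g_def .
qed

lemma expected_step_descent:
  fixes e :: "real^'m \<Rightarrow> real^'d"
  assumes \<alpha>: "\<alpha> > 0" and step: "\<alpha> * (\<zeta> * Lf * ((1 + \<eta>) / \<eta> * B)) \<le> \<rho> * (2 * \<zeta> - 1)"
    and e[measurable]: "e \<in> borel_measurable borel"
  shows "(\<integral>\<^sup>+v. ennreal (f (x - \<alpha> *\<^sub>R (wavg v G x + e v)) - finf) \<partial>D)
      + ennreal (\<alpha> * decrease_coeff * (norm (gradf x))^2)
    \<le> ennreal (growth_coeff \<alpha> * (f x - finf) + noise_coeff \<alpha>)
      + ennreal (error_coeff \<alpha>) * (\<integral>\<^sup>+v. ennreal ((norm (e v))^2) \<partial>D)"
proof -
  define g where "g = (norm (gradf x))^2"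
  define S where "S v = f (x - \<alpha> *\<^sub>R (wavg v G x + e v)) - finf" for v
  define P where "P v = f x - finf + \<alpha> * g / (2 * \<zeta>) + \<alpha> * decrease_coeff * g
    - \<alpha> * (gradf x \<bullet> wavg v G x) + Lf * \<alpha>^2 * (1 + 1/\<eta>) / 2 * (norm (wavg v G x))^2" for v
  define Q where "Q v = error_coeff \<alpha> * (norm (e v))^2" for v
  have \<alpha>cg: "\<alpha> * decrease_coeff * g \<ge> 0"
    using \<alpha> decrease_coeff_pos by (simp add: g_def)
  have S_nonneg: "0 \<le> S v" for v
    using f_lb by (simp add: S_def)
  have "S v + \<alpha> * decrease_coeff * g \<le> P v + Q v" for v
    using inexact_step_upper_bound[OF f_has_derivative f_lip Lf_nonneg \<alpha>, of \<zeta> \<eta> x "wavg v G x" "e v"] zeta eta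
    by (simp add: S_def P_def Q_def g_def error_coeff_def algebra_simps)
  moreover have "integrable D P"
    unfolding P_def using integrable_inner_wavg integrable_norm_wavg_sq by simp
  moreover have S_meas: "(\<lambda>v. ennreal (S v)) \<in> borel_measurable D"
    and "Q \<in> borel_measurable D"
    and E_meas: "(\<lambda>v. ennreal ((norm (e v))^2)) \<in> borel_measurable D"
    unfolding S_def Q_def by (intro measurable_D_borel; measurable)+
  ultimately have bound: "(\<integral>\<^sup>+v. ennreal (S v + \<alpha> * decrease_coeff * g) \<partial>D)
      \<le> ennreal (integral\<^sup>L D P) + (\<integral>\<^sup>+v. ennreal (Q v) \<partial>D)"
    using S_nonneg \<alpha>cg error_coeff_nonneg[of \<alpha>] \<alpha>
    by (intro nn_integral_le_integral_add_nn_integral) (auto simp: Q_def)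
  have "(\<integral>\<^sup>+v. ennreal (S v) \<partial>D) + ennreal (\<alpha> * decrease_coeff * g)
      = (\<integral>\<^sup>+v. ennreal (S v) + ennreal (\<alpha> * decrease_coeff * g) \<partial>D)"
    using S_meas by (simp add: nn_integral_add D.emeasure_space_1)
  also have "\<dots> = (\<integral>\<^sup>+v. ennreal (S v + \<alpha> * decrease_coeff * g) \<partial>D)"
    using S_nonneg \<alpha>cg by (intro nn_integral_cong ennreal_plus[symmetric]) auto
  also note bound
  also have "ennreal (integral\<^sup>L D P) + (\<integral>\<^sup>+v. ennreal (Q v) \<partial>D)
      \<le> ennreal (growth_coeff \<alpha> * (f x - finf) + noise_coeff \<alpha>) + (\<integral>\<^sup>+v. ennreal (Q v) \<partial>D)"
    unfolding P_def g_def using integral_step_majorant_le[OF \<alpha> step] by (intro add_right_mono ennreal_leI)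
  also have "(\<integral>\<^sup>+v. ennreal (Q v) \<partial>D) = ennreal (error_coeff \<alpha>) * (\<integral>\<^sup>+v. ennreal ((norm (e v))^2) \<partial>D)"
    unfolding Q_def using error_coeff_nonneg[of \<alpha>] \<alpha>
    by (simp add: ennreal_mult nn_integral_cmult[OF E_meas])
  finally show ?thesis
    unfolding S_def g_def .
qed

end

section \<open>The iteration\<close>

locale isgd = isgd_objective D F G Lf finf A B C \<eta> \<zeta> \<rho> + M: prob_space M
  for D :: "(real^'m::finite) measure" and F :: "'m \<Rightarrow> real^'d::finite \<Rightarrow> real"
    and G Lf finf A B C \<eta> \<zeta> \<rho> and M :: "'w measure"
  + fixes V :: "nat \<Rightarrow> 'w \<Rightarrow> real^'m" and \<theta> :: "nat \<Rightarrow> 'w \<Rightarrow> real^'d" and \<theta>0 :: "real^'d"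
    and e :: "real^'m \<Rightarrow> real^'d \<Rightarrow> real^'d" and \<alpha> \<epsilon> :: "nat \<Rightarrow> real"
  assumes V_meas: "\<And>k. V k \<in> borel_measurable M"
    and V_law: "\<And>k. distr M borel (V k) = D"
    and V_indep: "M.indep_vars (\<lambda>_. borel) V UNIV"
    and \<theta>_0: "\<And>\<omega>. \<theta> 0 \<omega> = \<theta>0"
    and \<theta>_Suc: "\<And>k \<omega>. \<theta> (Suc k) \<omega> =
        \<theta> k \<omega> - \<alpha> k *\<^sub>R (wavg (V k \<omega>) G (\<theta> k \<omega>) + e (V k \<omega>) (\<theta> k \<omega>))"
    and e_meas: "(\<lambda>p. e (fst p) (snd p)) \<in> borel_measurable borel"
    and A2: "\<And>k. AE \<omega> in M.
        nn_cond_exp M (vimage_algebra (space M) (\<theta> k) borel)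
          (\<lambda>\<omega>. ennreal ((norm (e (V k \<omega>) (\<theta> k \<omega>)))^2)) \<omega> \<le> ennreal ((\<epsilon> k)^2)"
    and alpha_pos: "\<And>k. \<alpha> k > 0"
    and alpha_antimono: "antimono \<alpha>"
    and alpha_sq: "summable (\<lambda>k. (\<alpha> k)^2)"
    and alpha_lim: "(\<lambda>k. 1 / (real k * \<alpha> k)) \<longlonglongrightarrow> 0"
    and alpha0: "\<alpha> 0 * (\<zeta> * Lf * ((1 + \<eta>) / \<eta> * B)) \<le> \<rho> * (2 * \<zeta> - 1)"
begin

definition isgd_step :: "nat \<Rightarrow> real^'d \<Rightarrow> real^'m \<Rightarrow> real^'d" where
  "isgd_step k x v = x - \<alpha> k *\<^sub>R (wavg v G x + e v x)"

definition expected_gap :: "nat \<Rightarrow> ennreal" where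
  "expected_gap k = (\<integral>\<^sup>+\<omega>. ennreal (f (\<theta> k \<omega>) - finf) \<partial>M)"

definition expected_sq_grad :: "nat \<Rightarrow> ennreal" where
  "expected_sq_grad k = (\<integral>\<^sup>+\<omega>. ennreal ((norm (gradf (\<theta> k \<omega>)))^2) \<partial>M)"

definition noise :: "nat \<Rightarrow> real" where
  "noise k = noise_coeff (\<alpha> k) + error_coeff (\<alpha> k) * (\<epsilon> k)^2"

lemma borel_measurable_error_pair:
  "(\<lambda>p :: (real^'d) \<times> (real^'m). e (snd p) (fst p)) \<in> borel_measurable (borel \<Otimes>\<^sub>M borel)"
proof -
  have "(\<lambda>p :: (real^'d) \<times> (real^'m). (snd p, fst p)) \<in> measurable (borel \<Otimes>\<^sub>M borel) (borel \<Otimes>\<^sub>M borel)"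
    by measurable
  from measurable_comp[OF this e_meas[folded borel_prod]] show ?thesis by (simp add: comp_def)
qed

lemma borel_measurable_error_sample[measurable]: "(\<lambda>v. e v x) \<in> borel_measurable borel"
  using measurable_Pair2[OF borel_measurable_error_pair, of x] by simp

lemma borel_measurable_isgd_step:
  "(\<lambda>p. isgd_step k (fst p) (snd p)) \<in> borel_measurable (borel \<Otimes>\<^sub>M borel)"
  unfolding isgd_step_def using borel_measurable_wavg borel_measurable_error_pair by measurable

lemma \<theta>_Suc_isgd_step: "\<theta> (Suc k) \<omega> = isgd_step k (\<theta> k \<omega>) (V k \<omega>)"
  by (simp add: \<theta>_Suc isgd_step_def)

lemma \<theta>_eq_iterate_inputs: "\<theta> k \<omega> = iterate_inputs isgd_step \<theta>0 (\<lambda>j. V j \<omega>) k"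
proof (induction k)
  case (Suc k)
  then show ?case by (simp only: \<theta>_Suc_isgd_step iterate_inputs.simps)
qed (simp add: \<theta>_0)

lemma borel_measurable_\<theta>[measurable]: "\<theta> k \<in> borel_measurable M"
proof (induction k)
  case (Suc k)
  have "(\<lambda>\<omega>. (\<theta> k \<omega>, V k \<omega>)) \<in> measurable M (borel \<Otimes>\<^sub>M borel)"
    using Suc V_meas by measurable
  from measurable_comp[OF this borel_measurable_isgd_step[of k]] show ?case
    by (simp add: comp_def \<theta>_Suc_isgd_step[abs_def])
qed (simp add: \<theta>_0)

text \<open>The iterate \<open>\<theta> k\<close> is a measurable function of \<open>V 0, \<dots>, V (k - 1)\<close> and hence independent of
  the fresh sample \<open>V k\<close>.\<close>

lemma nn_integral_iterate_fresh_sample: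
  assumes \<phi>: "\<phi> \<in> borel_measurable (borel \<Otimes>\<^sub>M borel)"
  shows "(\<integral>\<^sup>+\<omega>. \<phi> (\<theta> k \<omega>, V k \<omega>) \<partial>M) = (\<integral>\<^sup>+\<omega>. (\<integral>\<^sup>+v. \<phi> (\<theta> k \<omega>, v) \<partial>D) \<partial>M)"
proof -
  have indep: "M.indep_var (PiM {..<k} (\<lambda>_. borel)) (\<lambda>\<omega>. restrict (\<lambda>j. V j \<omega>) {..<k})
      (PiM {k} (\<lambda>_. borel)) (\<lambda>\<omega>. restrict (\<lambda>j. V j \<omega>) {k})"
    using V_indep by (intro M.indep_var_restrict) auto
  have past: "(\<lambda>w. iterate_inputs isgd_step \<theta>0 w k) \<in> borel_measurable (PiM {..<k} (\<lambda>_. borel))"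
    using borel_measurable_isgd_step by (rule measurable_iterate_inputs) simp
  have fresh: "(\<lambda>w. w k) \<in> measurable (PiM {k} (\<lambda>_. borel)) borel"
    using measurable_component_singleton[of k "{k}" "\<lambda>_. borel"] by simp
  have law: "distr M borel (\<lambda>\<omega>. restrict (\<lambda>j. V j \<omega>) {k} k) = D"
    using V_law by simp
  have "iterate_inputs isgd_step \<theta>0 (restrict (\<lambda>j. V j \<omega>) {..<k}) k = \<theta> k \<omega>" for \<omega>
    unfolding \<theta>_eq_iterate_inputs by (rule iterate_inputs_cong) simp
  moreover note M.nn_integral_indep_var_Fubini[OF indep, OF past, OF fresh, OF law, OF \<phi>]
  ultimately show ?thesis by simp
qed

lemma expected_sq_error_le:
  "(\<integral>\<^sup>+\<omega>. ennreal ((norm (e (V k \<omega>) (\<theta> k \<omega>)))^2) \<partial>M) \<le> ennreal ((\<epsilon> k)^2)"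
proof -
  let ?F = "vimage_algebra (space M) (\<theta> k) borel"
  interpret F: finite_measure_subalgebra M ?F
    by unfold_locales (simp add: subalgebra_def sets_image_in_sets)
  have "(\<lambda>\<omega>. (\<theta> k \<omega>, V k \<omega>)) \<in> measurable M (borel \<Otimes>\<^sub>M borel)"
    using V_meas by measurable
  from measurable_comp[OF this borel_measurable_error_pair]
  have "(\<lambda>\<omega>. ennreal ((norm (e (V k \<omega>) (\<theta> k \<omega>)))^2)) \<in> borel_measurable M"
    by (simp add: comp_def)
  then have "(\<integral>\<^sup>+\<omega>. ennreal ((norm (e (V k \<omega>) (\<theta> k \<omega>)))^2) \<partial>M)
      = (\<integral>\<^sup>+\<omega>. nn_cond_exp M ?F (\<lambda>\<omega>. ennreal ((norm (e (V k \<omega>) (\<theta> k \<omega>)))^2)) \<omega> \<partial>M)"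
    using F.nn_cond_exp_intg[of "\<lambda>_. 1"] by simp
  also have "\<dots> \<le> (\<integral>\<^sup>+\<omega>. ennreal ((\<epsilon> k)^2) \<partial>M)"
    using A2[of k] by (intro nn_integral_mono_AE) auto
  finally show ?thesis by (simp add: M.emeasure_space_1)
qed

lemma step_size_condition: "\<alpha> k * (\<zeta> * Lf * ((1 + \<eta>) / \<eta> * B)) \<le> \<rho> * (2 * \<zeta> - 1)"
proof -
  have "\<alpha> k \<le> \<alpha> 0"
    using alpha_antimono by (simp add: antimono_def)
  moreover have "0 \<le> \<zeta> * Lf * ((1 + \<eta>) / \<eta> * B)"
    using zeta eta Lf_nonneg ABC_nonneg by simp
  ultimately have "\<alpha> k * (\<zeta> * Lf * ((1 + \<eta>) / \<eta> * B)) \<le> \<alpha> 0 * (\<zeta> * Lf * ((1 + \<eta>) / \<eta> * B))"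
    by (rule mult_right_mono)
  then show ?thesis using alpha0 by linarith
qed

lemma noise_nonneg: "noise k \<ge> 0"
  unfolding noise_def using noise_coeff_nonneg error_coeff_nonneg alpha_pos[of k] by (simp add: less_imp_le)

definition expected_next_gap :: "nat \<Rightarrow> real^'d \<Rightarrow> ennreal" where
  "expected_next_gap k x = (\<integral>\<^sup>+v. ennreal (f (isgd_step k x v) - finf) \<partial>D)"

definition expected_sq_error :: "real^'d \<Rightarrow> ennreal" where
  "expected_sq_error x = (\<integral>\<^sup>+v. ennreal ((norm (e v x))^2) \<partial>D)"

lemma borel_measurable_gap_step:
  "(\<lambda>p. ennreal (f (isgd_step k (fst p) (snd p)) - finf)) \<in> borel_measurable (borel \<Otimes>\<^sub>M borel)"
proof -
  have "(\<lambda>x. ennreal (f x - finf)) \<in> borel_measurable borel"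
    by measurable
  from measurable_compose[OF borel_measurable_isgd_step this] show ?thesis .
qed

lemma borel_measurable_sq_error_pair:
  "(\<lambda>p. ennreal ((norm (e (snd p) (fst p)))^2)) \<in> borel_measurable (borel \<Otimes>\<^sub>M borel)"
proof -
  have "(\<lambda>y :: real^'d. ennreal ((norm y)^2)) \<in> borel_measurable borel"
    by measurable
  from measurable_compose[OF borel_measurable_error_pair this] show ?thesis .
qed

lemma borel_measurable_expected_next_gap[measurable]: "expected_next_gap k \<in> borel_measurable borel"
  unfolding expected_next_gap_def[abs_def]
  using borel_measurable_nn_integral_sample[OF borel_measurable_gap_step] by simp

lemma borel_measurable_expected_sq_error[measurable]: "expected_sq_error \<in> borel_measurable borel"
  unfolding expected_sq_error_def[abs_def]
  using borel_measurable_nn_integral_sample[OF borel_measurable_sq_error_pair] by simp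

lemma expected_gap_Suc: "expected_gap (Suc k) = (\<integral>\<^sup>+\<omega>. expected_next_gap k (\<theta> k \<omega>) \<partial>M)"
  using nn_integral_iterate_fresh_sample[OF borel_measurable_gap_step, of k]
  by (simp add: expected_gap_def expected_next_gap_def \<theta>_Suc_isgd_step)

lemma nn_integral_expected_sq_error_le: "(\<integral>\<^sup>+\<omega>. expected_sq_error (\<theta> k \<omega>) \<partial>M) \<le> ennreal ((\<epsilon> k)^2)"
  using nn_integral_iterate_fresh_sample[OF borel_measurable_sq_error_pair, of k] expected_sq_error_le[of k]
  by (simp add: expected_sq_error_def)

lemma expected_next_gap_le:
  "expected_next_gap k x + ennreal (\<alpha> k * decrease_coeff) * ennreal ((norm (gradf x))^2)
    \<le> ennreal (growth_coeff (\<alpha> k)) * ennreal (f x - finf) + ennreal (noise_coeff (\<alpha> k))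
      + ennreal (error_coeff (\<alpha> k)) * expected_sq_error x"
proof -
  have "expected_next_gap k x + ennreal (\<alpha> k * decrease_coeff * (norm (gradf x))^2)
    \<le> ennreal (growth_coeff (\<alpha> k) * (f x - finf) + noise_coeff (\<alpha> k))
      + ennreal (error_coeff (\<alpha> k)) * expected_sq_error x"
    unfolding expected_next_gap_def expected_sq_error_def isgd_step_def
    using expected_step_descent[OF alpha_pos step_size_condition borel_measurable_error_sample] .
  then show ?thesis
    using growth_coeff_ge_1[of "\<alpha> k"] alpha_pos[of k] decrease_coeff_pos f_lb[of x] noise_coeff_nonneg[of "\<alpha> k"]
    by (simp add: ennreal_mult)
qed

lemma expected_gap_recursion:
  "expected_gap (Suc k) + ennreal (\<alpha> k * decrease_coeff) * expected_sq_grad k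
    \<le> ennreal (growth_coeff (\<alpha> k)) * expected_gap k + ennreal (noise k)"
proof -
  have "expected_gap (Suc k) + ennreal (\<alpha> k * decrease_coeff) * expected_sq_grad k
      = (\<integral>\<^sup>+\<omega>. expected_next_gap k (\<theta> k \<omega>) + ennreal (\<alpha> k * decrease_coeff) * ennreal ((norm (gradf (\<theta> k \<omega>)))^2) \<partial>M)"
    unfolding expected_gap_Suc expected_sq_grad_def by (simp add: nn_integral_add nn_integral_cmult)
  also have "\<dots> \<le> (\<integral>\<^sup>+\<omega>. ennreal (growth_coeff (\<alpha> k)) * ennreal (f (\<theta> k \<omega>) - finf)
      + ennreal (noise_coeff (\<alpha> k)) + ennreal (error_coeff (\<alpha> k)) * expected_sq_error (\<theta> k \<omega>) \<partial>M)"
    by (intro nn_integral_mono expected_next_gap_le)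
  also have "\<dots> = ennreal (growth_coeff (\<alpha> k)) * expected_gap k + ennreal (noise_coeff (\<alpha> k))
      + ennreal (error_coeff (\<alpha> k)) * (\<integral>\<^sup>+\<omega>. expected_sq_error (\<theta> k \<omega>) \<partial>M)"
    unfolding expected_gap_def by (simp add: nn_integral_add nn_integral_cmult M.emeasure_space_1)
  also have "\<dots> \<le> ennreal (growth_coeff (\<alpha> k)) * expected_gap k + ennreal (noise_coeff (\<alpha> k))
      + ennreal (error_coeff (\<alpha> k)) * ennreal ((\<epsilon> k)^2)"
    using nn_integral_expected_sq_error_le by (intro add_left_mono mult_left_mono) simp_all
  also have "\<dots> = ennreal (growth_coeff (\<alpha> k)) * expected_gap k + ennreal (noise k)"
    unfolding noise_def using noise_coeff_nonneg[of "\<alpha> k"] error_coeff_nonneg[of "\<alpha> k"] alpha_pos[of k]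
    by (simp add: ennreal_mult add.assoc)
  finally show ?thesis .
qed

definition growth_bound :: real where
  "growth_bound = exp (Lf * (1 + 1/\<eta>) * A * (\<Sum>j. (\<alpha> j)^2))"

definition error_weight :: real where
  "error_weight = \<zeta> / 2 + Lf * (1 + \<eta>) / 2 * \<alpha> 0"

lemma error_weight_nonneg: "error_weight \<ge> 0"
  unfolding error_weight_def using zeta Lf_nonneg eta alpha_pos[of 0] by simp

lemma growth_prod_le: "(\<Prod>j<K. growth_coeff (\<alpha> j)) \<le> growth_bound"
proof -
  have "(\<Prod>j<K. growth_coeff (\<alpha> j)) \<le> exp (\<Sum>j<K. Lf * (1 + 1/\<eta>) * A * (\<alpha> j)^2)"
    unfolding growth_coeff_def using Lf_nonneg eta ABC_nonneg by (intro prod_one_plus_le_exp_sum) simp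
  moreover have "(\<Sum>j<K. Lf * (1 + 1/\<eta>) * A * (\<alpha> j)^2) \<le> Lf * (1 + 1/\<eta>) * A * (\<Sum>j. (\<alpha> j)^2)"
    unfolding sum_distrib_left[symmetric]
    using Lf_nonneg eta ABC_nonneg alpha_sq by (intro mult_left_mono sum_le_suminf) auto
  ultimately show ?thesis
    unfolding growth_bound_def by (meson exp_le_cancel_iff order_trans)
qed

lemma error_coeff_le: "error_coeff (\<alpha> k) \<le> error_weight * \<alpha> k"
proof -
  have "Lf * (1 + \<eta>) / 2 * \<alpha> k \<le> Lf * (1 + \<eta>) / 2 * \<alpha> 0"
    using alpha_antimono Lf_nonneg eta by (intro mult_left_mono) (auto simp: antimono_def)
  then have "Lf * (1 + \<eta>) / 2 * \<alpha> k * \<alpha> k \<le> Lf * (1 + \<eta>) / 2 * \<alpha> 0 * \<alpha> k"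
    using less_imp_le[OF alpha_pos[of k]] by (rule mult_right_mono)
  moreover have "error_coeff (\<alpha> k) = \<zeta> / 2 * \<alpha> k + Lf * (1 + \<eta>) / 2 * \<alpha> k * \<alpha> k"
    by (simp add: error_coeff_def power2_eq_square algebra_simps)
  moreover have "error_weight * \<alpha> k = \<zeta> / 2 * \<alpha> k + Lf * (1 + \<eta>) / 2 * \<alpha> 0 * \<alpha> k"
    by (simp add: error_weight_def algebra_simps)
  ultimately show ?thesis by linarith
qed

lemma sum_noise_le:
  "(\<Sum>k<K. noise k) \<le> noise_coeff 1 * (\<Sum>j. (\<alpha> j)^2) + error_weight * (\<Sum>k<K. \<alpha> k * (\<epsilon> k)^2)"
proof -
  have "noise k \<le> noise_coeff 1 * (\<alpha> k)^2 + error_weight * (\<alpha> k * (\<epsilon> k)^2)" for k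
  proof -
    have "error_coeff (\<alpha> k) * (\<epsilon> k)^2 \<le> error_weight * \<alpha> k * (\<epsilon> k)^2"
      using error_coeff_le by (rule mult_right_mono) simp
    then show ?thesis
      by (simp add: noise_def noise_coeff_def mult.assoc)
  qed
  then have "(\<Sum>k<K. noise k) \<le> (\<Sum>k<K. noise_coeff 1 * (\<alpha> k)^2 + error_weight * (\<alpha> k * (\<epsilon> k)^2))"
    by (rule sum_mono)
  also have "\<dots> = noise_coeff 1 * (\<Sum>k<K. (\<alpha> k)^2) + error_weight * (\<Sum>k<K. \<alpha> k * (\<epsilon> k)^2)"
    by (simp add: sum.distrib sum_distrib_left)
  also have "noise_coeff 1 * (\<Sum>k<K. (\<alpha> k)^2) \<le> noise_coeff 1 * (\<Sum>j. (\<alpha> j)^2)"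
    using noise_coeff_nonneg alpha_sq by (intro mult_left_mono sum_le_suminf) auto
  finally show ?thesis by simp
qed

lemma expected_gap_real_recursion:
  shows "expected_sq_grad k = ennreal (enn2real (expected_sq_grad k))"
    and "enn2real (expected_gap (Suc k)) + \<alpha> k * decrease_coeff * enn2real (expected_sq_grad k)
      \<le> growth_coeff (\<alpha> k) * enn2real (expected_gap k) + noise k"
proof -
  have fin: "expected_gap 0 < \<infinity>"
    by (simp add: expected_gap_def \<theta>_0 M.emeasure_space_1)
  have w: "\<alpha> k * decrease_coeff > 0" for k
    using alpha_pos[of k] decrease_coeff_pos by simp
  have a: "growth_coeff (\<alpha> k) \<ge> 0" for k
    using growth_coeff_ge_1[of "\<alpha> k"] by simp
  note real_rec = real_recursion_of_ennreal[OF expected_gap_recursion fin w a noise_nonneg]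
  show "expected_sq_grad k = ennreal (enn2real (expected_sq_grad k))"
    by (rule real_rec(1))
  show "enn2real (expected_gap (Suc k)) + \<alpha> k * decrease_coeff * enn2real (expected_sq_grad k)
      \<le> growth_coeff (\<alpha> k) * enn2real (expected_gap k) + noise k"
    by (rule real_rec(2))
qed

lemma weighted_sum_expected_sq_grad_le:
  "decrease_coeff * (\<Sum>k<K. \<alpha> k * enn2real (expected_sq_grad k))
    \<le> growth_bound * (enn2real (expected_gap 0) + noise_coeff 1 * (\<Sum>j. (\<alpha> j)^2))
      + growth_bound * error_weight * (\<Sum>k<K. \<alpha> k * (\<epsilon> k)^2)"
proof -
  have "(\<Sum>k<K. \<alpha> k * decrease_coeff * enn2real (expected_sq_grad k))
      \<le> growth_bound * (enn2real (expected_gap 0) + (\<Sum>k<K. noise k))"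
  proof (rule sum_le_of_recursion)
    show "0 \<le> \<alpha> k * decrease_coeff * enn2real (expected_sq_grad k)" for k
      using alpha_pos[of k] decrease_coeff_pos by simp
  qed (use expected_gap_real_recursion(2) growth_coeff_ge_1 noise_nonneg growth_prod_le in auto)
  also have "\<dots> \<le> growth_bound * (enn2real (expected_gap 0)
      + (noise_coeff 1 * (\<Sum>j. (\<alpha> j)^2) + error_weight * (\<Sum>k<K. \<alpha> k * (\<epsilon> k)^2)))"
    using sum_noise_le[of K] by (intro mult_left_mono add_left_mono) (auto simp: growth_bound_def)
  finally show ?thesis
    by (simp add: sum_distrib_left algebra_simps)
qed

lemma min_expected_sq_grad_bound:
  "\<exists>C1 C2. C1 > 0 \<and> C2 > 0 \<and>
    (\<forall>K\<ge>1. Min ((\<lambda>k. \<integral>\<^sup>+\<omega>. ennreal ((norm (gradf (\<theta> k \<omega>)))^2) \<partial>M) ` {..<K})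
      \<le> ennreal (C1 / (real K * \<alpha> K) + C2 * ((1 / (real K * \<alpha> K)) * (\<Sum>k<K. \<alpha> k * (\<epsilon> k)^2))))"
proof -
  define a where "a = growth_bound * (enn2real (expected_gap 0) + noise_coeff 1 * (\<Sum>j. (\<alpha> j)^2))"
  define b where "b = growth_bound * error_weight"
  define C1 where "C1 = a / decrease_coeff + 1"
  define C2 where "C2 = b / decrease_coeff + 1"
  have "a \<ge> 0"
    unfolding a_def growth_bound_def using noise_coeff_nonneg[of 1] alpha_sq
    by (intro mult_nonneg_nonneg add_nonneg_nonneg suminf_nonneg) auto
  moreover have "b \<ge> 0"
    unfolding b_def growth_bound_def using error_weight_nonneg by simp
  ultimately have C: "C1 > 0" "C2 > 0" "a \<le> decrease_coeff * C1" "b \<le> decrease_coeff * C2"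
    using decrease_coeff_pos by (simp_all add: C1_def C2_def field_simps add_nonneg_pos)
  have "Min ((\<lambda>k. \<integral>\<^sup>+\<omega>. ennreal ((norm (gradf (\<theta> k \<omega>)))^2) \<partial>M) ` {..<K})
      \<le> ennreal (C1 / (real K * \<alpha> K) + C2 * ((1 / (real K * \<alpha> K)) * (\<Sum>k<K. \<alpha> k * (\<epsilon> k)^2)))"
    if "K \<ge> 1" for K
  proof -
    have "0 \<le> (\<Sum>k<K. \<alpha> k * (\<epsilon> k)^2)"
      using alpha_pos by (intro sum_nonneg) (simp add: less_imp_le)
    from exists_le_rate[OF alpha_antimono alpha_pos enn2real_nonneg \<open>K \<ge> 1\<close> decrease_coeff_pos this C(3,4)
        weighted_sum_expected_sq_grad_le[of K, folded a_def b_def mult.assoc]]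
    obtain k where "k < K" and k: "enn2real (expected_sq_grad k)
        \<le> C1 / (real K * \<alpha> K) + C2 * ((1 / (real K * \<alpha> K)) * (\<Sum>k<K. \<alpha> k * (\<epsilon> k)^2))"
      by blast
    have "Min ((\<lambda>k. \<integral>\<^sup>+\<omega>. ennreal ((norm (gradf (\<theta> k \<omega>)))^2) \<partial>M) ` {..<K}) \<le> expected_sq_grad k"
      unfolding expected_sq_grad_def using \<open>k < K\<close> by (intro Min_le) auto
    also have "\<dots> \<le> ennreal (C1 / (real K * \<alpha> K) + C2 * ((1 / (real K * \<alpha> K)) * (\<Sum>k<K. \<alpha> k * (\<epsilon> k)^2)))"
      using k by (subst expected_gap_real_recursion(1)) (rule ennreal_leI)
    finally show ?thesis .
  qed
  with C show ?thesis by auto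
qed

lemma min_expected_norm_grad_tendsto_zero:
  assumes "(\<lambda>K. (1 / (real K * \<alpha> K)) * (\<Sum>k<K. \<alpha> k * (\<epsilon> k)^2)) \<longlonglongrightarrow> 0"
  shows "(\<lambda>K. Min ((\<lambda>k. \<integral>\<^sup>+\<omega>. ennreal (norm (gradf (\<theta> k \<omega>))) \<partial>M) ` {..<K})) \<longlonglongrightarrow> 0"
proof -
  obtain C1 C2 where bound: "\<And>K. K \<ge> 1 \<Longrightarrow> Min ((\<lambda>k. \<integral>\<^sup>+\<omega>. ennreal ((norm (gradf (\<theta> k \<omega>)))^2) \<partial>M) ` {..<K})
      \<le> ennreal (C1 / (real K * \<alpha> K) + C2 * ((1 / (real K * \<alpha> K)) * (\<Sum>k<K. \<alpha> k * (\<epsilon> k)^2)))"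
    using min_expected_sq_grad_bound by blast
  have "(\<lambda>K. C1 * (1 / (real K * \<alpha> K)) + C2 * ((1 / (real K * \<alpha> K)) * (\<Sum>k<K. \<alpha> k * (\<epsilon> k)^2))) \<longlonglongrightarrow> C1 * 0 + C2 * 0"
    using alpha_lim assms by (intro tendsto_intros)
  then show ?thesis
    using bound by (intro M.Min_nn_integral_norm_tendsto_zero) auto
qed

end

theorem mainTheorem3:
  fixes M :: "'w measure"
    and D :: "(real^'m::finite) measure"
    and F :: "'m \<Rightarrow> real^'d::finite \<Rightarrow> real"
    and G :: "'m \<Rightarrow> real^'d \<Rightarrow> real^'d"
    and e :: "real^'m \<Rightarrow> real^'d \<Rightarrow> real^'d"
    and V :: "nat \<Rightarrow> 'w \<Rightarrow> real^'m"
    and \<theta> :: "nat \<Rightarrow> 'w \<Rightarrow> real^'d"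
    and \<theta>0 :: "real^'d"
    and \<alpha> \<epsilon> :: "nat \<Rightarrow> real"
    and Lf finf A B C \<eta> \<zeta> \<rho> :: real
  assumes M_prob: "prob_space M"
    and D_prob: "prob_space D" and D_sets: "sets D = sets borel"
    and D_indep: "prob_space.indep_vars D (\<lambda>_. borel) (\<lambda>i v. v $ i) UNIV"
    and D_mean: "\<And>i. integral\<^sup>L D (\<lambda>v. v $ i) = 1"
    and D_sq: "\<And>i. integrable D (\<lambda>v. (v $ i)^2)"
    \<comment> \<open>sampling: v^k iid with law D, independent of each other\<close>
    and V_meas: "\<And>k. V k \<in> borel_measurable M"
    and V_law: "\<And>k. distr M borel (V k) = D"
    and V_indep: "prob_space.indep_vars M (\<lambda>_. borel) V UNIV"
    \<comment> \<open>ISGD iteration\<close>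
    and \<theta>_0: "\<And>\<omega>. \<theta> 0 \<omega> = \<theta>0"
    and \<theta>_Suc: "\<And>k \<omega>. \<theta> (Suc k) \<omega> =
        \<theta> k \<omega> - \<alpha> k *\<^sub>R (wavg (V k \<omega>) G (\<theta> k \<omega>) + e (V k \<omega>) (\<theta> k \<omega>))"
    and e_meas: "(\<lambda>p. e (fst p) (snd p)) \<in> borel_measurable borel"
    \<comment> \<open>(A1)\<close>
    and F_grad: "\<And>i x. GDERIV (F i) x :> G i x"
    and G_lip: "\<And>i. \<exists>L. \<forall>x y. norm (G i x - G i y) \<le> L * norm (x - y)"
    and F_bdd: "\<And>i. bdd_below (range (F i))"
    and f_lip: "\<And>x y. norm (wavg ones G x - wavg ones G y) \<le> Lf * norm (x - y)"
    and f_lb: "\<And>x. finf \<le> wavg ones F x"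
    and ABC_nonneg: "A \<ge> 0" "B \<ge> 0" "C \<ge> 0"
    and ABC: "\<And>x. integral\<^sup>L D (\<lambda>v. (norm (wavg v G x))^2)
               \<le> 2 * A * (wavg ones F x - finf) + B * (norm (wavg ones G x))^2 + C"
    \<comment> \<open>(A2)\<close>
    and eps_nonneg: "\<And>k. \<epsilon> k \<ge> 0"
    and A2: "\<And>k. AE \<omega> in M.
        nn_cond_exp M (vimage_algebra (space M) (\<theta> k) borel)
          (\<lambda>\<omega>. ennreal ((norm (e (V k \<omega>) (\<theta> k \<omega>)))^2)) \<omega> \<le> ennreal ((\<epsilon> k)^2)"
    \<comment> \<open>(A3)\<close>
    and alpha_pos: "\<And>k. \<alpha> k > 0"
    and alpha_antimono: "antimono \<alpha>"
    and alpha_sq: "summable (\<lambda>k. (\<alpha> k)^2)"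
    and alpha_lim: "(\<lambda>k. 1 / (real k * \<alpha> k)) \<longlonglongrightarrow> 0"
    \<comment> \<open>parameters\<close>
    and eta: "\<eta> > 0" and zeta: "\<zeta> > 1/2" and rho: "0 < \<rho>" "\<rho> < 1"
    and alpha0: "\<alpha> 0 * (\<zeta> * Lf * ((1 + \<eta>) / \<eta> * B)) \<le> \<rho> * (2 * \<zeta> - 1)"
  shows "(\<exists>C1 C2. C1 > 0 \<and> C2 > 0 \<and>
           (\<forall>K\<ge>1. Min ((\<lambda>k. \<integral>\<^sup>+\<omega>. ennreal ((norm (wavg ones G (\<theta> k \<omega>)))^2) \<partial>M) ` {..<K})
              \<le> ennreal (C1 / (real K * \<alpha> K)
                  + C2 * ((1 / (real K * \<alpha> K)) * (\<Sum>k<K. \<alpha> k * (\<epsilon> k)^2)))))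
       \<and> (((\<lambda>K. (1 / (real K * \<alpha> K)) * (\<Sum>k<K. \<alpha> k * (\<epsilon> k)^2)) \<longlonglongrightarrow> 0) \<longrightarrow>
           (\<lambda>K. Min ((\<lambda>k. \<integral>\<^sup>+\<omega>. ennreal (norm (wavg ones G (\<theta> k \<omega>))) \<partial>M) ` {..<K}))
             \<longlonglongrightarrow> 0)"
proof -
  interpret isgd D F G Lf finf A B C \<eta> \<zeta> \<rho> M V \<theta> \<theta>0 e \<alpha> \<epsilon>
    by (intro isgd.intro isgd_objective.intro isgd_objective_axioms.intro isgd_axioms.intro)
      (fact assms)+
  show ?thesis
    using min_expected_sq_grad_bound min_expected_norm_grad_tendsto_zero by blast
qed

end
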